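(* In the setting of the context, let $u_l\in k[\Gamma]$, $1\le l\le p$, be elements which are central in $A$ and such that $u_l=0$ whenever $\psi_l^{N_l}\ne\varepsilon$. Let $M$ be a free right $k[\Gamma]$-module with basis $(m(t))_{t\in\mathbb T}$, and let $\varphi:A\to M$ be the right $k[\Gamma]$-linear map with $\varphi(y^ty^{aN})=m(t)u^a$ for all $t\in\mathbb T$, $a\in\mathbb N^p$, where $u^a=u_1^{a_1}\cdots u_p^{a_p}$. Then the kernel of $\varphi$ is a right ideal of $A$.
   Context: $k$ algebraically closed of characteristic $0$. $\Gamma$ is an abelian group, $\widehat\Gamma$ its characters, $\varepsilon$ the trivial character. $A$ is an algebra containing the group algebra $k[\Gamma]$ as a subalgebra, $p\ge1$, and $y_1,\dots,y_p\in A$, $h_1,\dots,h_p\in\Gamma$, $\psi_1,\dots,\psi_p\in\widehat\Gamma$, $N_1,\dots,N_p\ge1$ satisfy: (c1) $gy_l=\psi_l(g)y_lg$ for all $l$ and $g\in\Gamma$; (c2) $y_ky_l^{N_l}=\psi_l^{N_l}(h_k)y_l^{N_l}y_k$ for all $k,l$; (c3) the elements $y_1^{a_1}\cdots y_p^{a_p}g$, $a_i\ge0$, $g\in\Gamma$, form a basis of $A$. Put $\mathbb T=\{t\in\mathbb N^p:0\le t_l<N_l\ \forall l\}$ and, for $a\in\mathbb N^p$, $y^a=y_1^{a_1}\cdots y_p^{a_p}$ and $aN=(a_1N_1,\dots,a_pN_p)$; thus $y^{aN}=y_1^{a_1N_1}\cdots y_p^{a_pN_p}$. Every element of $A$ is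 uniquely $\sum_{t\in\mathbb T,a\in\mathbb N^p}y^ty^{aN}v_{t,a}$ with $v_{t,a}\in k[\Gamma]$, so $\varphi$ is well defined. *)

theory Defs
  imports "HOL-Computational_Algebra.Polynomial"
begin

text \<open>Algebras over a field are modelled as a ring 'a together with a ring
homomorphism sc from the field 'k into the centre of 'a; the k-vector space
structure is x \<mapsto> sc c * x.  Indices l = 1..p of the paper are 0..<p here.\<close>

definition alg_closed_field :: "'k::field itself \<Rightarrow> bool" where
  "alg_closed_field _ \<longleftrightarrow> (\<forall>q :: 'k poly. degree q > 0 \<longrightarrow> (\<exists>x. poly q x = 0))"

definition central_hom :: "('k::field \<Rightarrow> 'a::ring_1) \<Rightarrow> bool" where
  "central_hom sc \<longleftrightarrow> sc 1 = 1 \<and> (\<forall>c d. sc (c + d) = sc c + sc d) \<and>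
     (\<forall>c d. sc (c * d) = sc c * sc d) \<and> (\<forall>c x. sc c * x = x * sc c)"

text \<open>Group homomorphism from the (additively written) abelian group into the
units of A, i.e. the inclusion of the group elements into A.\<close>
definition grp_emb :: "('g::ab_group_add \<Rightarrow> 'a::ring_1) \<Rightarrow> bool" where
  "grp_emb \<iota> \<longleftrightarrow> \<iota> 0 = 1 \<and> (\<forall>g h. \<iota> (g + h) = \<iota> g * \<iota> h)"

definition is_character :: "('g::ab_group_add \<Rightarrow> 'k::field) \<Rightarrow> bool" where
  "is_character \<psi> \<longleftrightarrow> (\<forall>g. \<psi> g \<noteq> 0) \<and> (\<forall>g h. \<psi> (g + h) = \<psi> g * \<psi> h)"

definition group_alg :: "('k::field \<Rightarrow> 'a::ring_1) \<Rightarrow> ('g \<Rightarrow> 'a) \<Rightarrow> 'a set" where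
  "group_alg sc \<iota> = {x. \<exists>F c. finite F \<and> x = (\<Sum>g\<in>F. sc (c g) * \<iota> g)}"

definition is_kbasis :: "('k::field \<Rightarrow> 'a::ring_1) \<Rightarrow> 'i set \<Rightarrow> ('i \<Rightarrow> 'a) \<Rightarrow> bool" where
  "is_kbasis sc S e \<longleftrightarrow> (\<forall>x. \<exists>!c. (\<forall>s. s \<notin> S \<longrightarrow> c s = 0) \<and> finite {s. c s \<noteq> 0} \<and>
       x = (\<Sum>s\<in>{s. c s \<noteq> 0}. sc (c s) * e s))"

definition multi_idx :: "nat \<Rightarrow> (nat \<Rightarrow> nat) set" where
  "multi_idx p = {a. \<forall>i\<ge>p. a i = 0}"

definition ymon :: "(nat \<Rightarrow> 'a::ring_1) \<Rightarrow> nat \<Rightarrow> (nat \<Rightarrow> nat) \<Rightarrow> 'a" where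
  "ymon y p a = prod_list (map (\<lambda>i. y i ^ a i) [0..<p])"

definition Tset :: "nat \<Rightarrow> (nat \<Rightarrow> nat) \<Rightarrow> (nat \<Rightarrow> nat) set" where
  "Tset p N = {t. (\<forall>l<p. t l < N l) \<and> (\<forall>l\<ge>p. t l = 0)}"

definition right_ideal :: "'a::ring_1 set \<Rightarrow> bool" where
  "right_ideal S \<longleftrightarrow> 0 \<in> S \<and> (\<forall>x\<in>S. \<forall>z\<in>S. x - z \<in> S) \<and> (\<forall>x\<in>S. \<forall>b. x * b \<in> S)"

text \<open>The free right k[\<Gamma>]-module with basis (m(t))_{t \<in> \<T>} is realised as the
functions \<T> \<rightarrow> k[\<Gamma>] (extended by 0 outside \<T>), inside (nat\<Rightarrow>nat) \<Rightarrow> 'a, with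
pointwise right multiplication; m(t) is the indicator of t.\<close>
definition mbasis :: "(nat \<Rightarrow> nat) \<Rightarrow> (nat \<Rightarrow> nat) \<Rightarrow> 'a::ring_1" where
  "mbasis t = (\<lambda>s. if s = t then 1 else 0)"

definition rmul :: "('i \<Rightarrow> 'a::ring_1) \<Rightarrow> 'a \<Rightarrow> ('i \<Rightarrow> 'a)" where
  "rmul f v = (\<lambda>s. f s * v)"

end

theory Submission
  imports Defs
begin

text \<open>Write Y_l = y_l^{N_l} and let I be the right ideal \<Sum>_l (Y_l - u_l) A. By (c2), and because
u_l is central and vanishes unless \<psi>_l^{N_l} = \<epsilon>, y_k (Y_l - u_l) = (Y_l - u_l) c y_k for a scalar c,
so I is stable under left multiplication by every monomial. Reordering monomials up to scalars
shows that \<phi> kills (Y_l - u_l) y^t y^{bN}, hence \<phi>(I) = 0; conversely x - \<Sum>_t y^t \<phi>(x)_t \<in> I for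
every x, because y^{bN} - u^b \<in> I. Therefore ker \<phi> = I.\<close>

lemma right_ideal_add:
  assumes I: "right_ideal I" and "x \<in> I" "z \<in> I"
  shows "x + z \<in> I"
proof -
  have "0 - z \<in> I" using assms unfolding right_ideal_def by blast
  then have "x - (0 - z) \<in> I" using assms unfolding right_ideal_def by blast
  then show ?thesis by simp
qed

lemma power_mult_mem:
  fixes v :: "'a::monoid_mult"
  assumes "\<And>a. a \<in> I \<Longrightarrow> v * a \<in> I" and "a \<in> I"
  shows "v ^ n * a \<in> I"
  by (induction n) (simp_all add: assms mult.assoc)

lemma prod_list_mult_mem:
  fixes f :: "'i \<Rightarrow> 'a::monoid_mult"
  assumes "\<And>i a. i \<in> set xs \<Longrightarrow> a \<in> I \<Longrightarrow> f i * a \<in> I" and "a \<in> I"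
  shows "prod_list (map f xs) * a \<in> I"
  using assms by (induction xs arbitrary: a) (simp_all add: mult.assoc)

lemma power_diff_mem:
  assumes I: "right_ideal I" and x: "\<And>a. a \<in> I \<Longrightarrow> x * a \<in> I" and xz: "x - z \<in> I"
  shows "x ^ n - z ^ n \<in> I"
proof (induction n)
  case 0
  then show ?case using I by (simp add: right_ideal_def)
next
  case (Suc n)
  have "x ^ Suc n - z ^ Suc n = x * (x ^ n - z ^ n) + (x - z) * z ^ n"
    by (simp add: algebra_simps)
  moreover have "(x - z) * z ^ n \<in> I" using I xz by (simp add: right_ideal_def)
  ultimately show ?case using Suc x right_ideal_add[OF I] by simp
qed

lemma prod_list_diff_mem:
  assumes I: "right_ideal I"
    and x: "\<And>i a. i \<in> set xs \<Longrightarrow> a \<in> I \<Longrightarrow> x i * a \<in> I"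
    and xz: "\<And>i. i \<in> set xs \<Longrightarrow> x i - z i \<in> I"
  shows "prod_list (map x xs) - prod_list (map z xs) \<in> I"
  using x xz
proof (induction xs)
  case Nil
  then show ?case using I by (simp add: right_ideal_def)
next
  case (Cons i xs)
  let ?P = "prod_list (map x xs)" and ?Q = "prod_list (map z xs)"
  have "x i * ?P - z i * ?Q = x i * (?P - ?Q) + (x i - z i) * ?Q"
    by (simp add: algebra_simps)
  moreover have "x i * (?P - ?Q) \<in> I" using Cons by simp
  moreover have "(x i - z i) * ?Q \<in> I" using I Cons.prems(2) by (simp add: right_ideal_def)
  ultimately show ?case using right_ideal_add[OF I] by simp
qed

definition units_subgroup :: "'k::field set \<Rightarrow> bool" where
  "units_subgroup S \<longleftrightarrow> 1 \<in> S \<and> (\<forall>a\<in>S. \<forall>b\<in>S. a * b \<in> S) \<and> (\<forall>a\<in>S. a \<noteq> 0 \<and> inverse a \<in> S)"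

lemma units_subgroup_nonzero: "units_subgroup (- {0})"
  unfolding units_subgroup_def by simp

lemma units_subgroup_one: "units_subgroup {1}"
  unfolding units_subgroup_def by simp

locale central_scalars =
  fixes sc :: "'k::field \<Rightarrow> 'a::ring_1"
  assumes central_hom: "central_hom sc"
begin

lemma sc_one: "sc 1 = 1"
  and sc_mult: "sc (c * d) = sc c * sc d"
  and sc_commute: "sc c * x = x * sc c"
  using central_hom unfolding central_hom_def by blast+

lemma sc_left_commute: "x * (sc c * z) = sc c * (x * z)"
  by (metis mult.assoc sc_commute)

lemma sc_inverse_mult: "c \<noteq> 0 \<Longrightarrow> sc (inverse c) * sc c = 1"
  by (simp flip: sc_mult add: sc_one)

definition skew_commute :: "'k set \<Rightarrow> 'a \<Rightarrow> 'a \<Rightarrow> bool" where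
  "skew_commute S v w \<longleftrightarrow> (\<exists>s\<in>S. v * w = sc s * w * v)"

lemma skew_commute_subset: "S \<subseteq> T \<Longrightarrow> skew_commute S v w \<Longrightarrow> skew_commute T v w"
  unfolding skew_commute_def by blast

lemma skew_commute_one_right: "units_subgroup S \<Longrightarrow> skew_commute S v 1"
  unfolding skew_commute_def units_subgroup_def using sc_one by force

lemma skew_commute_mult_right:
  assumes S: "units_subgroup S" and 1: "skew_commute S v w1" and 2: "skew_commute S v w2"
  shows "skew_commute S v (w1 * w2)"
proof -
  obtain s1 where s1: "s1 \<in> S" "v * w1 = sc s1 * w1 * v" using 1 unfolding skew_commute_def by blast
  obtain s2 where s2: "s2 \<in> S" "v * w2 = sc s2 * w2 * v" using 2 unfolding skew_commute_def by blast
  have "v * (w1 * w2) = sc s1 * w1 * (v * w2)" by (simp only: s1(2) mult.assoc[symmetric])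
  also have "\<dots> = sc s1 * (w1 * (sc s2 * (w2 * v)))" by (simp only: s2(2) mult.assoc)
  also have "\<dots> = sc (s1 * s2) * (w1 * w2) * v" by (simp only: sc_left_commute[of w1] sc_mult mult.assoc)
  finally show ?thesis using S s1 s2 unfolding skew_commute_def units_subgroup_def by blast
qed

lemma skew_commute_sym:
  assumes S: "units_subgroup S" and vw: "skew_commute S v w"
  shows "skew_commute S w v"
proof -
  obtain s where s: "s \<in> S" "v * w = sc s * w * v" using vw unfolding skew_commute_def by blast
  have s': "s \<noteq> 0" "inverse s \<in> S" using S s unfolding units_subgroup_def by auto
  have "sc (inverse s) * (v * w) = (sc (inverse s) * sc s) * (w * v)" by (simp only: s mult.assoc)
  then have "w * v = sc (inverse s) * v * w" by (simp add: sc_inverse_mult[OF s'(1)] mult.assoc)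
  then show ?thesis using s' unfolding skew_commute_def by blast
qed

lemma skew_commute_power_right: "units_subgroup S \<Longrightarrow> skew_commute S v w \<Longrightarrow> skew_commute S v (w ^ n)"
  by (induction n) (auto intro: skew_commute_one_right skew_commute_mult_right)

lemma skew_commute_power_left: "units_subgroup S \<Longrightarrow> skew_commute S v w \<Longrightarrow> skew_commute S (v ^ n) w"
  using skew_commute_power_right skew_commute_sym by blast

lemma skew_commute_prod_list_right:
  "units_subgroup S \<Longrightarrow> (\<And>i. i \<in> set xs \<Longrightarrow> skew_commute S v (f i)) \<Longrightarrow>
     skew_commute S v (prod_list (map f xs))"
  by (induction xs) (auto intro: skew_commute_one_right skew_commute_mult_right)

lemma skew_commute_prod_list_left:
  "units_subgroup S \<Longrightarrow> (\<And>i. i \<in> set xs \<Longrightarrow> skew_commute S (f i) w) \<Longrightarrow>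
     skew_commute S (prod_list (map f xs)) w"
  using skew_commute_prod_list_right[of S xs w f] skew_commute_sym by blast

lemma prod_list_mult_skew_split:
  assumes S: "units_subgroup S" and comm: "\<And>i j. i < j \<Longrightarrow> j < n \<Longrightarrow> skew_commute S (z i) (x j)"
  shows "\<exists>s\<in>S. prod_list (map (\<lambda>i. x i * z i) [0..<n]) =
           sc s * (prod_list (map x [0..<n]) * prod_list (map z [0..<n]))"
  using comm
proof (induction n)
  case 0
  then show ?case using S sc_one unfolding units_subgroup_def by force
next
  case (Suc n)
  let ?X = "prod_list (map x [0..<n])" and ?Z = "prod_list (map z [0..<n])"
  obtain s where s: "s \<in> S" "prod_list (map (\<lambda>i. x i * z i) [0..<n]) = sc s * (?X * ?Z)"
    using Suc by force
  have "skew_commute S ?Z (x n)" using Suc.prems by (auto intro: skew_commute_prod_list_left[OF S])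
  then obtain s' where s': "s' \<in> S" "?Z * x n = sc s' * x n * ?Z" unfolding skew_commute_def by blast
  have "prod_list (map (\<lambda>i. x i * z i) [0..<Suc n]) = sc s * (?X * (?Z * x n) * z n)"
    by (simp add: s mult.assoc)
  also have "\<dots> = sc (s * s') * ((?X * x n) * (?Z * z n))"
    by (simp only: s'(2) sc_left_commute[of ?X] sc_mult mult.assoc)
  finally show ?case using S s s' unfolding units_subgroup_def by auto
qed

lemma prod_list_insert_skew:
  assumes S: "units_subgroup S" and l: "l < n"
    and comm: "\<And>i. l < i \<Longrightarrow> i < n \<Longrightarrow> skew_commute S (f i) w"
  shows "\<exists>s\<in>S. prod_list (map f [0..<n]) * w = sc s * prod_list (map (f(l := f l * w)) [0..<n])"
  using l comm
proof (induction n)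
  case 0
  then show ?case by simp
next
  case (Suc n)
  have prefix: "map (f(l := f l * w)) [0..<m] = map f [0..<m]" if "m \<le> l" for m
    using that by (intro map_cong) auto
  show ?case
  proof (cases "n = l")
    case True
    then have "prod_list (map f [0..<Suc n]) * w = sc 1 * prod_list (map (f(l := f l * w)) [0..<Suc n])"
      by (simp add: prefix sc_one mult.assoc)
    then show ?thesis using S unfolding units_subgroup_def by blast
  next
    case False
    then have ln: "l < n" using Suc.prems(1) by simp
    let ?F = "prod_list (map f [0..<n])" and ?F' = "prod_list (map (f(l := f l * w)) [0..<n])"
    have "\<exists>s\<in>S. ?F * w = sc s * ?F'" by (rule Suc.IH[OF ln]) (simp add: Suc.prems(2))
    then obtain s where s: "s \<in> S" "?F * w = sc s * ?F'" by blast
    obtain s' where s': "s' \<in> S" "f n * w = sc s' * w * f n"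
      using Suc.prems(2)[OF ln] unfolding skew_commute_def by blast
    have "prod_list (map f [0..<Suc n]) * w = ?F * (sc s' * (w * f n))"
      by (simp add: s'(2) mult.assoc)
    also have "\<dots> = sc s' * ((?F * w) * f n)" by (simp only: sc_left_commute[of ?F] mult.assoc)
    also have "\<dots> = sc (s' * s) * (?F' * f n)" by (simp only: s(2) sc_mult mult.assoc)
    also have "\<dots> = sc (s' * s) * prod_list (map (f(l := f l * w)) [0..<Suc n])"
      using False by simp
    finally show ?thesis using S s s' unfolding units_subgroup_def by blast
  qed
qed

end

locale root_relations = central_scalars sc
  for sc :: "'k::field \<Rightarrow> 'a::ring_1" +
  fixes p :: nat and y :: "nat \<Rightarrow> 'a" and h :: "nat \<Rightarrow> 'g::ab_group_add"
    and \<psi> :: "nat \<Rightarrow> 'g \<Rightarrow> 'k" and N :: "nat \<Rightarrow> nat" and u :: "nat \<Rightarrow> 'a"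
  assumes chars: "\<And>l. l < p \<Longrightarrow> is_character (\<psi> l)"
    and y_mult_power: "\<And>k l. k < p \<Longrightarrow> l < p \<Longrightarrow>
               y k * y l ^ N l = sc (\<psi> l (h k) ^ N l) * y l ^ N l * y k"
    and u_central: "\<And>l x. l < p \<Longrightarrow> u l * x = x * u l"
    and u_zero: "\<And>l. l < p \<Longrightarrow> (\<exists>g. \<psi> l g ^ N l \<noteq> 1) \<Longrightarrow> u l = 0"
begin

abbreviation Y :: "nat \<Rightarrow> 'a" where
  "Y l \<equiv> y l ^ N l"

definition umon :: "(nat \<Rightarrow> nat) \<Rightarrow> 'a" where
  "umon b = prod_list (map (\<lambda>l. u l ^ b l) [0..<p])"

text \<open>The scalars picked up when Y_l is moved past monomials in the y's: only 1 unless u_l = 0.\<close>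
definition rel_scalars :: "nat \<Rightarrow> 'k set" where
  "rel_scalars l = (if u l = 0 then - {0} else {1})"

lemma units_subgroup_rel_scalars: "units_subgroup (rel_scalars l)"
  by (simp add: rel_scalars_def units_subgroup_nonzero units_subgroup_one)

lemma rel_scalars_nonzero: "rel_scalars l \<subseteq> - {0}"
  by (auto simp: rel_scalars_def)

lemma u_mult_rel_scalar: "s \<in> rel_scalars l \<Longrightarrow> u l * sc s = u l"
  by (auto simp: rel_scalars_def sc_one split: if_splits)

lemma skew_commute_y_Y:
  assumes k: "k < p" and l: "l < p"
  shows "skew_commute (rel_scalars l) (y k) (Y l)"
proof -
  have "\<psi> l (h k) ^ N l \<in> rel_scalars l"
  proof (cases "u l = 0")
    case True
    then show ?thesis using chars[OF l] by (simp add: rel_scalars_def is_character_def)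
  next
    case False
    then show ?thesis using u_zero[OF l] by (auto simp: rel_scalars_def)
  qed
  then show ?thesis using y_mult_power[OF k l] unfolding skew_commute_def by blast
qed

lemma skew_commute_Y_ymon:
  assumes l: "l < p"
  shows "skew_commute (rel_scalars l) (Y l) (ymon y p a)"
  unfolding ymon_def
proof (rule skew_commute_prod_list_right[OF units_subgroup_rel_scalars])
  fix i assume "i \<in> set [0..<p]"
  then have "skew_commute (rel_scalars l) (y i) (Y l)" using l by (simp add: skew_commute_y_Y)
  then show "skew_commute (rel_scalars l) (Y l) (y i ^ a i)"
    by (rule skew_commute_sym[OF units_subgroup_rel_scalars
          skew_commute_power_left[OF units_subgroup_rel_scalars]])
qed

lemma ymon_multiple: "ymon y p (\<lambda>i. b i * N i) = prod_list (map (\<lambda>i. Y i ^ b i) [0..<p])"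
  unfolding ymon_def by (simp only: power_mult[symmetric] mult.commute)

lemma ymon_normal_form:
  "\<exists>s. ymon y p a = sc s * (ymon y p (\<lambda>i. a i mod N i) * ymon y p (\<lambda>i. a i div N i * N i))"
proof -
  have y_power_split: "y i ^ a i = y i ^ (a i mod N i) * Y i ^ (a i div N i)" for i
    by (simp only: power_mult[symmetric] power_add[symmetric] mod_mult_div_eq)
  have "skew_commute (- {0}) (Y i ^ (a i div N i)) (y j ^ (a j mod N j))" if "i < j" "j < p" for i j
  proof -
    have "skew_commute (- {0}) (y j) (Y i)"
      using that by (intro skew_commute_subset[OF rel_scalars_nonzero skew_commute_y_Y]) auto
    then show ?thesis
      by (rule skew_commute_sym[OF units_subgroup_nonzero skew_commute_power_left[OF units_subgroup_nonzero
            skew_commute_power_right[OF units_subgroup_nonzero]]])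
  qed
  from prod_list_mult_skew_split[OF units_subgroup_nonzero, where n = p and
      x = "\<lambda>i. y i ^ (a i mod N i)" and z = "\<lambda>i. Y i ^ (a i div N i)", OF this] show ?thesis
    unfolding ymon_multiple by (auto simp: ymon_def y_power_split)
qed

lemma ymon_multiple_mult_Y:
  assumes l: "l < p"
  shows "\<exists>s\<in>rel_scalars l. ymon y p (\<lambda>i. b i * N i) * Y l =
           sc s * ymon y p (\<lambda>i. (b(l := Suc (b l))) i * N i)"
proof -
  have "(\<lambda>i. Y i ^ (b(l := Suc (b l))) i) = (\<lambda>i. Y i ^ b i)(l := Y l ^ b l * Y l)"
    by (simp add: fun_eq_iff power_commutes)
  moreover have "skew_commute (rel_scalars l) (Y i ^ b i) (Y l)" if "i < p" for i
    using skew_commute_y_Y[OF that l]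
    by (intro skew_commute_power_left units_subgroup_rel_scalars)
  ultimately show ?thesis
    using prod_list_insert_skew[OF units_subgroup_rel_scalars l, where f = "\<lambda>i. Y i ^ b i" and w = "Y l"]
    unfolding ymon_multiple by simp
qed

lemma umon_Suc:
  assumes l: "l < p"
  shows "umon (b(l := Suc (b l))) = umon b * u l"
proof -
  have "(\<lambda>i. u i ^ (b(l := Suc (b l))) i) = (\<lambda>i. u i ^ b i)(l := u l ^ b l * u l)"
    by (simp add: fun_eq_iff power_commutes)
  moreover have "skew_commute {1} (u i ^ b i) (u l)" for i
    unfolding skew_commute_def by (simp add: sc_one u_central[OF l])
  ultimately show ?thesis
    using prod_list_insert_skew[OF units_subgroup_one l, where f = "\<lambda>i. u i ^ b i" and w = "u l"]
    unfolding umon_def by (simp add: sc_one)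
qed

definition rel_ideal :: "'a set" where
  "rel_ideal = {x. \<exists>f. x = (\<Sum>l<p. (Y l - u l) * f l)}"

lemma rel_ideal_sum: "(\<Sum>l<p. (Y l - u l) * f l) \<in> rel_ideal"
  unfolding rel_ideal_def by blast

lemma right_ideal_rel_ideal: "right_ideal rel_ideal"
  unfolding right_ideal_def
proof (intro conjI ballI allI)
  show "0 \<in> rel_ideal" using rel_ideal_sum[of "\<lambda>_. 0"] by simp
next
  fix x z assume "x \<in> rel_ideal" "z \<in> rel_ideal"
  then obtain f g where "x = (\<Sum>l<p. (Y l - u l) * f l)" "z = (\<Sum>l<p. (Y l - u l) * g l)"
    unfolding rel_ideal_def by blast
  then have "x - z = (\<Sum>l<p. (Y l - u l) * (f l - g l))"
    by (simp add: sum_subtractf right_diff_distrib)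
  then show "x - z \<in> rel_ideal" using rel_ideal_sum by simp
next
  fix x b assume "x \<in> rel_ideal"
  then obtain f where "x = (\<Sum>l<p. (Y l - u l) * f l)" unfolding rel_ideal_def by blast
  then have "x * b = (\<Sum>l<p. (Y l - u l) * (f l * b))" by (simp add: sum_distrib_right mult.assoc)
  then show "x * b \<in> rel_ideal" using rel_ideal_sum by simp
qed

lemma rel_ideal_generator:
  assumes l: "l < p"
  shows "(Y l - u l) * w \<in> rel_ideal"
proof -
  have "(\<Sum>j<p. (Y j - u j) * (if j = l then w else 0)) = (\<Sum>j<p. if j = l then (Y l - u l) * w else 0)"
    by (rule sum.cong) auto
  also have "\<dots> = (Y l - u l) * w" using l by simp
  finally show ?thesis using rel_ideal_sum by metis
qed

lemma y_mult_relation: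
  assumes k: "k < p" and l: "l < p"
  shows "\<exists>s. y k * (Y l - u l) = (Y l - u l) * (sc s * y k)"
proof -
  obtain s where s: "s \<in> rel_scalars l" "y k * Y l = sc s * Y l * y k"
    using skew_commute_y_Y[OF k l] unfolding skew_commute_def by blast
  have "y k * (Y l - u l) = sc s * Y l * y k - u l * sc s * y k"
    by (simp add: right_diff_distrib s(2) u_central[OF l, of "y k", symmetric] u_mult_rel_scalar[OF s(1)])
  also have "\<dots> = (Y l - u l) * (sc s * y k)"
    by (simp add: left_diff_distrib sc_commute[of s "Y l"] mult.assoc)
  finally show ?thesis by blast
qed

lemma y_mult_rel_ideal:
  assumes k: "k < p" and x: "x \<in> rel_ideal"
  shows "y k * x \<in> rel_ideal"
proof -
  obtain f where f: "x = (\<Sum>l<p. (Y l - u l) * f l)" using x unfolding rel_ideal_def by blast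
  obtain s where s: "\<And>l. l < p \<Longrightarrow> y k * (Y l - u l) = (Y l - u l) * (sc (s l) * y k)"
    using y_mult_relation[OF k] by metis
  have "y k * x = (\<Sum>l<p. (Y l - u l) * (sc (s l) * y k * f l))"
    unfolding f sum_distrib_left by (rule sum.cong) (simp_all add: s mult.assoc[symmetric])
  then show ?thesis using rel_ideal_sum by simp
qed

lemma Y_power_mult_rel_ideal: "l < p \<Longrightarrow> x \<in> rel_ideal \<Longrightarrow> Y l ^ n * x \<in> rel_ideal"
  unfolding power_mult[symmetric] by (intro power_mult_mem y_mult_rel_ideal)

lemma ymon_mult_rel_ideal: "x \<in> rel_ideal \<Longrightarrow> ymon y p t * x \<in> rel_ideal"
  unfolding ymon_def by (intro prod_list_mult_mem power_mult_mem y_mult_rel_ideal) auto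

lemma ymon_multiple_diff_umon: "ymon y p (\<lambda>i. b i * N i) - umon b \<in> rel_ideal"
  unfolding ymon_multiple umon_def
proof (rule prod_list_diff_mem[OF right_ideal_rel_ideal])
  fix i assume "i \<in> set [0..<p]"
  then have i: "i < p" by simp
  show "Y i ^ b i * x \<in> rel_ideal" if "x \<in> rel_ideal" for x
    using Y_power_mult_rel_ideal[OF i that] .
  have "Y i - u i \<in> rel_ideal" using rel_ideal_generator[OF i, of 1] by simp
  moreover have "Y i * x \<in> rel_ideal" if "x \<in> rel_ideal" for x
    using Y_power_mult_rel_ideal[OF i that, of 1] by simp
  ultimately show "Y i ^ b i - u i ^ b i \<in> rel_ideal"
    using power_diff_mem[OF right_ideal_rel_ideal] by blast
qed

end

lemma div_N_multi_idx: "a \<in> multi_idx p \<Longrightarrow> (\<lambda>i. a i div N i) \<in> multi_idx p"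
  unfolding multi_idx_def by auto

lemma finite_Tset: "finite (Tset p N)"
proof (rule finite_subset)
  let ?M = "\<Sum>l<p. N l"
  have "t i < ?M" if "t \<in> Tset p N" "i < p" for t i
  proof -
    have "t i < N i" using that unfolding Tset_def by auto
    also have "N i \<le> ?M" using that(2) by (intro member_le_sum) auto
    finally show ?thesis .
  qed
  then show "Tset p N \<subseteq> {t. \<forall>i. (i \<in> {..<p} \<longrightarrow> t i \<in> {..<?M}) \<and> (i \<notin> {..<p} \<longrightarrow> t i = 0)}"
    unfolding Tset_def by auto
  show "finite {t. \<forall>i. (i \<in> {..<p} \<longrightarrow> t i \<in> {..<?M}) \<and> (i \<notin> {..<p} \<longrightarrow> t i = (0::nat))}"
    by (rule finite_set_of_finite_funs) auto
qed

locale kernel_map = root_relations sc p y h \<psi> N u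
  for sc :: "'k::field \<Rightarrow> 'a::ring_1" and p y h \<psi> N u +
  fixes \<iota> :: "'g::ab_group_add \<Rightarrow> 'a" and \<phi> :: "'a \<Rightarrow> (nat \<Rightarrow> nat) \<Rightarrow> 'a"
  assumes \<iota>: "grp_emb \<iota>"
    and N_pos: "\<And>l. l < p \<Longrightarrow> N l \<ge> 1"
    and basis: "is_kbasis sc (multi_idx p \<times> UNIV) (\<lambda>(a, g). ymon y p a * \<iota> g)"
    and u_group_alg: "\<And>l. l < p \<Longrightarrow> u l \<in> group_alg sc \<iota>"
    and \<phi>_add: "\<And>x z s. \<phi> (x + z) s = \<phi> x s + \<phi> z s"
    and \<phi>_rlin: "\<And>x v. v \<in> group_alg sc \<iota> \<Longrightarrow> \<phi> (x * v) = rmul (\<phi> x) v"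
    and \<phi>_basis: "\<And>t a. t \<in> Tset p N \<Longrightarrow> a \<in> multi_idx p \<Longrightarrow>
        \<phi> (ymon y p t * ymon y p (\<lambda>l. a l * N l)) =
          rmul (mbasis t) (prod_list (map (\<lambda>l. u l ^ a l) [0..<p]))"
begin

lemma sc_iota_group_alg: "sc c * \<iota> g \<in> group_alg sc \<iota>"
proof -
  have "finite {g} \<and> sc c * \<iota> g = (\<Sum>g'\<in>{g}. sc ((\<lambda>_. c) g') * \<iota> g')" by simp
  then show ?thesis unfolding group_alg_def by (intro CollectI exI)
qed

lemma sc_group_alg: "sc c \<in> group_alg sc \<iota>"
  using sc_iota_group_alg[of c 0] \<iota> unfolding grp_emb_def by simp

lemma basis_induct [case_names zero add monomial]:
  assumes zero: "P 0" and add: "\<And>x z. P x \<Longrightarrow> P z \<Longrightarrow> P (x + z)"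
    and monomial: "\<And>a v. a \<in> multi_idx p \<Longrightarrow> v \<in> group_alg sc \<iota> \<Longrightarrow> P (ymon y p a * v)"
  shows "P x"
proof -
  from basis[unfolded is_kbasis_def, rule_format, of x, THEN ex1_implies_ex] obtain c where
    c: "\<forall>s. s \<notin> multi_idx p \<times> UNIV \<longrightarrow> c s = 0"
       "x = (\<Sum>s\<in>{s. c s \<noteq> 0}. sc (c s) * (\<lambda>(a, g). ymon y p a * \<iota> g) s)"
    by blast
  have "P (\<Sum>s\<in>F. sc (c s) * (\<lambda>(a, g). ymon y p a * \<iota> g) s)" if "F \<subseteq> multi_idx p \<times> UNIV" for F
    using that
  proof (induction F rule: infinite_finite_induct)
    case (insert s F)
    obtain a g where s: "s = (a, g)" by fastforce
    have "sc (c s) * (ymon y p a * \<iota> g) = ymon y p a * (sc (c s) * \<iota> g)"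
      by (rule sc_left_commute[symmetric])
    then have "P (sc (c s) * (\<lambda>(a, g). ymon y p a * \<iota> g) s)"
      using insert.prems s by (simp add: monomial sc_iota_group_alg)
    then show ?case using insert add by simp
  qed (simp_all add: zero)
  moreover have "{s. c s \<noteq> 0} \<subseteq> multi_idx p \<times> UNIV" using c(1) by blast
  ultimately show ?thesis using c(2) by simp
qed

lemma \<phi>_zero: "\<phi> 0 = (\<lambda>_. 0)"
  using \<phi>_add[of 0 0] by (simp add: fun_eq_iff)

lemma \<phi>_diff: "\<phi> (x - z) s = \<phi> x s - \<phi> z s"
  using \<phi>_add[of "x - z" z s] by (simp add: algebra_simps)

lemma \<phi>_sum: "\<phi> (\<Sum>i\<in>F. f i) s = (\<Sum>i\<in>F. \<phi> (f i) s)"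
  by (induction F rule: infinite_finite_induct) (simp_all add: \<phi>_zero \<phi>_add)

lemma \<phi>_ymon_basis:
  "t \<in> Tset p N \<Longrightarrow> b \<in> multi_idx p \<Longrightarrow>
     \<phi> (ymon y p t * ymon y p (\<lambda>l. b l * N l)) = rmul (mbasis t) (umon b)"
  unfolding umon_def by (rule \<phi>_basis)

lemma mod_N_Tset:
  assumes "a \<in> multi_idx p"
  shows "(\<lambda>i. a i mod N i) \<in> Tset p N"
proof -
  have "a l mod N l < N l" if "l < p" for l using N_pos[OF that] by simp
  then show ?thesis using assms unfolding multi_idx_def Tset_def by auto
qed

lemma \<phi>_relation_ymon:
  assumes l: "l < p" and t: "t \<in> Tset p N" and b: "b \<in> multi_idx p"
  shows "\<phi> ((Y l - u l) * (ymon y p t * ymon y p (\<lambda>i. b i * N i))) = (\<lambda>_. 0)"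
proof -
  let ?T = "ymon y p t" and ?B = "ymon y p (\<lambda>i. b i * N i)"
  let ?b' = "b(l := Suc (b l))"
  let ?B' = "ymon y p (\<lambda>i. ?b' i * N i)"
  obtain s where s: "s \<in> rel_scalars l" "Y l * (?T * ?B) = sc s * (?T * ?B) * Y l"
    using skew_commute_mult_right[OF units_subgroup_rel_scalars
        skew_commute_Y_ymon[OF l] skew_commute_Y_ymon[OF l]]
    unfolding skew_commute_def by blast
  obtain s' where s': "s' \<in> rel_scalars l" "?B * Y l = sc s' * ?B'"
    using ymon_multiple_mult_Y[OF l] by blast
  have "Y l * (?T * ?B) = sc s * (?T * (sc s' * ?B'))" by (simp only: s(2) s'(2) mult.assoc)
  also have "\<dots> = sc (s * s') * (?T * ?B')" by (simp only: sc_left_commute[of ?T] sc_mult mult.assoc)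
  also have "\<dots> = (?T * ?B') * sc (s * s')" by (rule sc_commute)
  finally have Y_TB: "Y l * (?T * ?B) = (?T * ?B') * sc (s * s')" .
  have ss': "u l * sc (s * s') = u l"
    using s(1) s'(1) units_subgroup_rel_scalars[of l] unfolding units_subgroup_def
    by (blast intro: u_mult_rel_scalar)
  have b': "?b' \<in> multi_idx p" using b l unfolding multi_idx_def by auto
  have "\<phi> (Y l * (?T * ?B)) = rmul (mbasis t) (umon b * (u l * sc (s * s')))"
    unfolding Y_TB \<phi>_rlin[OF sc_group_alg] \<phi>_ymon_basis[OF t b'] umon_Suc[OF l]
    by (simp add: rmul_def mult.assoc)
  moreover have "\<phi> (u l * (?T * ?B)) = rmul (mbasis t) (umon b * u l)"
    unfolding u_central[OF l] \<phi>_rlin[OF u_group_alg[OF l]] \<phi>_ymon_basis[OF t b]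
    by (simp add: rmul_def mult.assoc)
  ultimately show ?thesis by (simp add: fun_eq_iff left_diff_distrib \<phi>_diff ss')
qed

lemma \<phi>_relation:
  assumes l: "l < p"
  shows "\<phi> ((Y l - u l) * x) = (\<lambda>_. 0)"
proof (induction x rule: basis_induct)
  case zero
  then show ?case by (simp add: \<phi>_zero)
next
  case (add x z)
  then show ?case by (simp add: distrib_left fun_eq_iff \<phi>_add)
next
  case (monomial a v)
  obtain s where s: "ymon y p a = sc s * (ymon y p (\<lambda>i. a i mod N i) * ymon y p (\<lambda>i. a i div N i * N i))"
    using ymon_normal_form by blast
  have "(Y l - u l) * (ymon y p a * v) =
      (Y l - u l) * (ymon y p (\<lambda>i. a i mod N i) * ymon y p (\<lambda>i. a i div N i * N i)) * sc s * v"
    by (simp only: s sc_left_commute[of "Y l - u l"] sc_commute[of s] mult.assoc)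
  then show ?case
    using \<phi>_relation_ymon[OF l mod_N_Tset[OF monomial(1)] div_N_multi_idx[OF monomial(1)]]
    by (simp add: \<phi>_rlin sc_group_alg monomial(2) rmul_def)
qed

lemma \<phi>_rel_ideal: "x \<in> rel_ideal \<Longrightarrow> \<phi> x = (\<lambda>_. 0)"
  unfolding rel_ideal_def by (auto simp: fun_eq_iff \<phi>_sum \<phi>_relation)

definition lift :: "'a \<Rightarrow> 'a" where
  "lift x = (\<Sum>t\<in>Tset p N. ymon y p t * \<phi> x t)"

lemma ymon_diff_lift:
  assumes a: "a \<in> multi_idx p"
  shows "ymon y p a - lift (ymon y p a) \<in> rel_ideal"
proof -
  let ?t = "\<lambda>i. a i mod N i" and ?b = "\<lambda>i. a i div N i"
  let ?T = "ymon y p ?t" and ?B = "ymon y p (\<lambda>i. ?b i * N i)"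
  have t: "?t \<in> Tset p N" using a by (rule mod_N_Tset)
  have b: "?b \<in> multi_idx p" using a by (rule div_N_multi_idx)
  obtain s where "ymon y p a = sc s * (?T * ?B)" using ymon_normal_form by blast
  then have ya: "ymon y p a = ?T * ?B * sc s" by (simp only: sc_commute)
  have "\<phi> (ymon y p a) = rmul (rmul (mbasis ?t) (umon ?b)) (sc s)"
    by (simp only: ya \<phi>_rlin[OF sc_group_alg] \<phi>_ymon_basis[OF t b])
  then have "lift (ymon y p a) = (\<Sum>t'\<in>Tset p N. if t' = ?t then ?T * (umon ?b * sc s) else 0)"
    unfolding lift_def by (intro sum.cong) (simp_all add: rmul_def mbasis_def)
  also have "\<dots> = ?T * (umon ?b * sc s)" using t finite_Tset by simp
  finally have "ymon y p a - lift (ymon y p a) = ?T * (?B - umon ?b) * sc s"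
    by (simp add: ya right_diff_distrib left_diff_distrib mult.assoc)
  then show ?thesis
    using ymon_mult_rel_ideal[OF ymon_multiple_diff_umon] right_ideal_rel_ideal
    unfolding right_ideal_def by simp
qed

lemma diff_lift_rel_ideal: "x - lift x \<in> rel_ideal"
proof (induction x rule: basis_induct)
  case zero
  then show ?case using right_ideal_rel_ideal by (simp add: lift_def \<phi>_zero right_ideal_def)
next
  case (add x z)
  have "x + z - lift (x + z) = (x - lift x) + (z - lift z)"
    by (simp add: lift_def \<phi>_add distrib_left sum.distrib)
  then show ?case using right_ideal_add[OF right_ideal_rel_ideal add] by metis
next
  case (monomial a v)
  have "ymon y p a * v - lift (ymon y p a * v) = (ymon y p a - lift (ymon y p a)) * v"
    by (simp add: lift_def \<phi>_rlin[OF monomial(2)] rmul_def sum_distrib_right mult.assoc left_diff_distrib)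
  then show ?case
    using ymon_diff_lift[OF monomial(1)] right_ideal_rel_ideal unfolding right_ideal_def by simp
qed

lemma kernel_\<phi>_eq_rel_ideal: "{x. \<phi> x = (\<lambda>_. 0)} = rel_ideal"
proof (intro equalityI subsetI)
  fix x assume "x \<in> {x. \<phi> x = (\<lambda>_. 0)}"
  then have "lift x = 0" by (simp add: lift_def)
  then show "x \<in> rel_ideal" using diff_lift_rel_ideal[of x] by simp
qed (simp add: \<phi>_rel_ideal)

end

theorem lemma4p1:
  fixes sc :: "'k::field_char_0 \<Rightarrow> 'a::ring_1"
    and \<iota> :: "'g::ab_group_add \<Rightarrow> 'a"
    and p :: nat
    and y :: "nat \<Rightarrow> 'a" and h :: "nat \<Rightarrow> 'g" and \<psi> :: "nat \<Rightarrow> 'g \<Rightarrow> 'k" and N :: "nat \<Rightarrow> nat"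
    and u :: "nat \<Rightarrow> 'a"
    and \<phi> :: "'a \<Rightarrow> ((nat \<Rightarrow> nat) \<Rightarrow> 'a)"
  assumes closed: "alg_closed_field TYPE('k)"
    and sc: "central_hom sc"
    and \<iota>: "grp_emb \<iota>"
    and p: "p \<ge> 1"
    and chars: "\<And>l. l < p \<Longrightarrow> is_character (\<psi> l)"
    and Npos: "\<And>l. l < p \<Longrightarrow> N l \<ge> 1"
    and c1: "\<And>l g. l < p \<Longrightarrow> \<iota> g * y l = sc (\<psi> l g) * y l * \<iota> g"
    and c2: "\<And>k l. k < p \<Longrightarrow> l < p \<Longrightarrow>
               y k * y l ^ N l = sc (\<psi> l (h k) ^ N l) * y l ^ N l * y k"
    and c3: "is_kbasis sc (multi_idx p \<times> UNIV) (\<lambda>(a, g). ymon y p a * \<iota> g)"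
    and u_in: "\<And>l. l < p \<Longrightarrow> u l \<in> group_alg sc \<iota>"
    and u_central: "\<And>l x. l < p \<Longrightarrow> u l * x = x * u l"
    and u_zero: "\<And>l. l < p \<Longrightarrow> (\<exists>g. \<psi> l g ^ N l \<noteq> 1) \<Longrightarrow> u l = 0"
    and \<phi>_add: "\<And>x z s. \<phi> (x + z) s = \<phi> x s + \<phi> z s"
    and \<phi>_rlin: "\<And>x v. v \<in> group_alg sc \<iota> \<Longrightarrow> \<phi> (x * v) = rmul (\<phi> x) v"
    and \<phi>_basis: "\<And>t a. t \<in> Tset p N \<Longrightarrow> a \<in> multi_idx p \<Longrightarrow>
        \<phi> (ymon y p t * ymon y p (\<lambda>l. a l * N l)) =
          rmul (mbasis t) (prod_list (map (\<lambda>l. u l ^ a l) [0..<p]))"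
  shows "right_ideal {x. \<phi> x = (\<lambda>_. 0)}"
proof -
  interpret kernel_map sc p y h \<psi> N u \<iota> \<phi>
    by unfold_locales (use assms in auto)
  show ?thesis unfolding kernel_\<phi>_eq_rel_ideal by (rule right_ideal_rel_ideal)
qed

end
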